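(* The map $\alpha\mapsto\mathsf{dark}(\alpha)$ is a bijection from the set of snowy weak compositions to the set $\mathsf{Rook}_+$ of non-attacking rook diagrams. Its inverse sends $R\in\mathsf{Rook}_+$ to the weak composition $\alpha$ with $\alpha_r=0$ if row $r$ of $R$ is empty and $\alpha_r=c$ if $(r,c)\in R$.
   Context: A weak composition is an infinite sequence of nonnegative integers with finitely many positive entries; it is snowy if its positive entries are distinct. A diagram is a finite subset of $\mathbb{Z}_{>0}^2$ ($(r,c)$ in row $r$, row 1 on top, column $c$); it is a non-attacking rook diagram if it has at most one cell in each row and each column. $D(\alpha)=\{(r,c):1\le c\le\alpha_r\}$. For a diagram $D$, $\mathsf{snow}(D)$ is built by iterating through rows from bottom to top: in row $r$ take the rightmost cell $(r,c)\in D$ such that column $c$ contains no dark cloud yet; if it exists label it a dark cloud and add snowflake cells at $(r',c)$ for all $r'<r$ with $(r',c)\notin D$. $\mathsf{dark}(\alpha)$ is the set of dark clouds of $\mathsf{snow}(D(\alpha))$. *)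

theory Defs
  imports Main
begin

type_synonym diagram = "(nat \<times> nat) set"

text \<open>Weak compositions: sequences alpha_1, alpha_2, ... of naturals, represented as
  functions nat => nat; index 0 is unused and fixed to 0.\<close>
definition weak_comp :: "(nat \<Rightarrow> nat) \<Rightarrow> bool" where
  "weak_comp \<alpha> \<longleftrightarrow> \<alpha> 0 = 0 \<and> finite {r. 0 < \<alpha> r}"

definition snowy :: "(nat \<Rightarrow> nat) \<Rightarrow> bool" where
  "snowy \<alpha> \<longleftrightarrow> weak_comp \<alpha> \<and> inj_on \<alpha> {r. 0 < \<alpha> r}"

definition is_diagram :: "diagram \<Rightarrow> bool" where
  "is_diagram D \<longleftrightarrow> finite D \<and> (\<forall>(r,c)\<in>D. 0 < r \<and> 0 < c)"

definition rook_diagrams :: "diagram set" where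
  "rook_diagrams = {D. is_diagram D \<and>
     (\<forall>r c c'. (r,c) \<in> D \<longrightarrow> (r,c') \<in> D \<longrightarrow> c = c') \<and>
     (\<forall>r r' c. (r,c) \<in> D \<longrightarrow> (r',c) \<in> D \<longrightarrow> r = r')}"

definition diag :: "(nat \<Rightarrow> nat) \<Rightarrow> diagram" where
  "diag \<alpha> = {(r,c). 1 \<le> r \<and> 1 \<le> c \<and> c \<le> \<alpha> r}"

text \<open>Snowflakes never influence the choice of dark clouds, so only dark clouds are tracked.\<close>
definition dark_step :: "diagram \<Rightarrow> diagram \<Rightarrow> nat \<Rightarrow> diagram" where
  "dark_step D C r =
     (let cs = {c. (r,c) \<in> D \<and> c \<notin> snd ` C}
      in if cs = {} then C else insert (r, Max cs) C)"

definition max_row :: "diagram \<Rightarrow> nat" where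
  "max_row D = (if D = {} then 0 else Max (fst ` D))"

definition dark_clouds :: "diagram \<Rightarrow> diagram" where
  "dark_clouds D = foldl (dark_step D) {} (rev [1..<Suc (max_row D)])"

definition dark :: "(nat \<Rightarrow> nat) \<Rightarrow> diagram" where
  "dark \<alpha> = dark_clouds (diag \<alpha>)"

definition rook_to_comp :: "diagram \<Rightarrow> nat \<Rightarrow> nat" where
  "rook_to_comp R r = (if \<exists>c. (r,c) \<in> R then (THE c. (r,c) \<in> R) else 0)"

end

theory Submission
  imports Defs
begin

text \<open>Let \<alpha> be snowy. When the snow construction reaches row r, the rightmost cell of row r
  of D(\<alpha>) is (r, \<alpha> r), and its column carries no dark cloud yet, because the dark clouds
  found so far lie in columns \<alpha> r' for rows r' below r and the positive entries of \<alpha>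
  are distinct. Hence dark(\<alpha>) is the graph of \<alpha> on its support, which is a non-attacking
  rook diagram; conversely rook_to_comp reads a composition back off such a graph.\<close>

definition comp_graph :: "(nat \<Rightarrow> nat) \<Rightarrow> diagram" where
  "comp_graph \<alpha> = {(r, \<alpha> r) | r. 0 < \<alpha> r}"

lemma dark_step_comp_graph:
  assumes inj: "inj_on \<alpha> {r. 0 < \<alpha> r}"
  shows "dark_step (diag \<alpha>) {p \<in> comp_graph \<alpha>. Suc j < fst p} (Suc j)
           = {p \<in> comp_graph \<alpha>. j < fst p}"
proof -
  define C where "C = {p \<in> comp_graph \<alpha>. Suc j < fst p}"
  define cs where "cs = {c. (Suc j, c) \<in> diag \<alpha> \<and> c \<notin> snd ` C}"
  have step: "dark_step (diag \<alpha>) C (Suc j) = (if cs = {} then C else insert (Suc j, Max cs) C)"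
    unfolding dark_step_def Let_def cs_def ..
  have above_j: "j < r \<longleftrightarrow> Suc j < r \<or> r = Suc j" for r by auto
  show ?thesis
  proof (cases "\<alpha> (Suc j) = 0")
    case True
    then have "cs = {}" by (auto simp: cs_def diag_def)
    moreover have "C = {p \<in> comp_graph \<alpha>. j < fst p}"
      using True by (auto simp: C_def comp_graph_def above_j)
    ultimately show ?thesis unfolding C_def[symmetric] step by simp
  next
    case False
    have "\<alpha> (Suc j) \<notin> snd ` C"
      using inj_onD[OF inj, of "Suc j"] False by (auto simp: C_def comp_graph_def)
    then have mem: "\<alpha> (Suc j) \<in> cs" using False by (auto simp: cs_def diag_def)
    have "cs \<subseteq> {..\<alpha> (Suc j)}" by (auto simp: cs_def diag_def)
    then have "Max cs = \<alpha> (Suc j)"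
      using mem by (intro Max_eqI) (auto intro: finite_subset)
    moreover have "insert (Suc j, \<alpha> (Suc j)) C = {p \<in> comp_graph \<alpha>. j < fst p}"
      using False by (auto simp: C_def comp_graph_def above_j)
    ultimately show ?thesis unfolding C_def[symmetric] step using mem by auto
  qed
qed

lemma foldl_dark_step_comp_graph:
  assumes "inj_on \<alpha> {r. 0 < \<alpha> r}"
  shows "foldl (dark_step (diag \<alpha>)) {p \<in> comp_graph \<alpha>. k < fst p} (rev [1..<Suc k])
           = {p \<in> comp_graph \<alpha>. 0 < fst p}"
proof (induction k)
  case 0
  show ?case by simp
next
  case (Suc k)
  then show ?case by (simp add: dark_step_comp_graph[OF assms])
qed

lemma finite_diag:
  assumes "weak_comp \<alpha>"
  shows "finite (diag \<alpha>)"
proof (rule finite_subset)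
  show "diag \<alpha> \<subseteq> (\<Union>r\<in>{r. 0 < \<alpha> r}. {r} \<times> {..\<alpha> r})"
    by (auto simp: diag_def)
  show "finite (\<Union>r\<in>{r. 0 < \<alpha> r}. {r} \<times> {..\<alpha> r})"
    using assms by (simp add: weak_comp_def)
qed

lemma le_max_row_diag:
  assumes "weak_comp \<alpha>" and "0 < \<alpha> r"
  shows "r \<le> max_row (diag \<alpha>)"
proof -
  have "(r, 1) \<in> diag \<alpha>" using assms by (cases r) (auto simp: diag_def weak_comp_def)
  then show ?thesis
    using finite_diag[OF assms(1)] by (auto simp: max_row_def intro!: Max_ge rev_image_eqI)
qed

lemma dark_snowy:
  assumes "snowy \<alpha>"
  shows "dark \<alpha> = comp_graph \<alpha>"
proof -
  have wc: "weak_comp \<alpha>" and inj: "inj_on \<alpha> {r. 0 < \<alpha> r}"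
    using assms by (auto simp: snowy_def)
  define m where "m = max_row (diag \<alpha>)"
  have no_graph_below: "{p \<in> comp_graph \<alpha>. m < fst p} = {}"
    using le_max_row_diag[OF wc] by (auto simp: comp_graph_def m_def leD)
  have "dark \<alpha> = foldl (dark_step (diag \<alpha>)) {p \<in> comp_graph \<alpha>. m < fst p} (rev [1..<Suc m])"
    unfolding dark_def dark_clouds_def m_def[symmetric] no_graph_below ..
  also have "\<dots> = {p \<in> comp_graph \<alpha>. 0 < fst p}"
    by (rule foldl_dark_step_comp_graph[OF inj])
  also have "\<dots> = comp_graph \<alpha>"
    using wc by (auto simp: comp_graph_def weak_comp_def intro: gr0I)
  finally show ?thesis .
qed

lemma comp_graph_in_rook_diagrams:
  assumes "snowy \<alpha>"
  shows "comp_graph \<alpha> \<in> rook_diagrams"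
proof -
  have "comp_graph \<alpha> = (\<lambda>r. (r, \<alpha> r)) ` {r. 0 < \<alpha> r}" by (auto simp: comp_graph_def)
  then have "finite (comp_graph \<alpha>)" using assms by (simp add: snowy_def weak_comp_def)
  then show ?thesis
    using assms by (auto simp: rook_diagrams_def is_diagram_def comp_graph_def snowy_def
        weak_comp_def inj_on_def) (metis gr0I)
qed

lemma rook_to_comp_comp_graph: "rook_to_comp (comp_graph \<alpha>) = \<alpha>"
  by (auto simp: rook_to_comp_def comp_graph_def fun_eq_iff)

lemma rook_to_comp_eq:
  assumes "R \<in> rook_diagrams" and "(r, c) \<in> R"
  shows "rook_to_comp R r = c"
  using assms unfolding rook_to_comp_def rook_diagrams_def by (auto intro!: the_equality)

lemma rook_to_comp_pos_iff:
  assumes R: "R \<in> rook_diagrams"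
  shows "0 < rook_to_comp R r \<longleftrightarrow> r \<in> fst ` R"
proof
  assume "0 < rook_to_comp R r"
  then obtain c where "(r, c) \<in> R" by (auto simp: rook_to_comp_def split: if_splits)
  then show "r \<in> fst ` R" by force
next
  assume "r \<in> fst ` R"
  then obtain c where "(r, c) \<in> R" by auto
  moreover from this have "0 < c" using R by (auto simp: rook_diagrams_def is_diagram_def)
  ultimately show "0 < rook_to_comp R r" by (simp add: rook_to_comp_eq[OF R])
qed

lemma comp_graph_rook_to_comp:
  assumes R: "R \<in> rook_diagrams"
  shows "comp_graph (rook_to_comp R) = R"
proof -
  have "comp_graph (rook_to_comp R) = (\<lambda>r. (r, rook_to_comp R r)) ` fst ` R"
    by (auto simp: comp_graph_def rook_to_comp_pos_iff[OF R])
  also have "\<dots> = R"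
    using rook_to_comp_eq[OF R] by (auto simp: image_image intro: rev_image_eqI)
  finally show ?thesis .
qed

lemma snowy_rook_to_comp:
  assumes R: "R \<in> rook_diagrams"
  shows "snowy (rook_to_comp R)"
proof -
  have "{r. 0 < rook_to_comp R r} = fst ` R" using rook_to_comp_pos_iff[OF R] by auto
  moreover have "finite R" and "0 \<notin> fst ` R"
    using R by (auto simp: rook_diagrams_def is_diagram_def)
  moreover have "inj_on (rook_to_comp R) (fst ` R)"
    using R rook_to_comp_eq[OF R] by (force simp: inj_on_def rook_diagrams_def)
  ultimately show ?thesis
    using rook_to_comp_pos_iff[OF R, of 0] by (simp add: snowy_def weak_comp_def)
qed

theorem lemma4p20:
  shows "bij_betw dark {\<alpha>. snowy \<alpha>} rook_diagrams \<and>
         (\<forall>R\<in>rook_diagrams. the_inv_into {\<alpha>. snowy \<alpha>} dark R = rook_to_comp R)"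
proof -
  have dark_rook_to_comp: "dark (rook_to_comp R) = R" if "R \<in> rook_diagrams" for R
    using that by (simp add: dark_snowy snowy_rook_to_comp comp_graph_rook_to_comp)
  have bij: "bij_betw dark {\<alpha>. snowy \<alpha>} rook_diagrams"
  proof (rule bij_betw_byWitness[where f' = rook_to_comp])
    show "\<forall>\<alpha>\<in>{\<alpha>. snowy \<alpha>}. rook_to_comp (dark \<alpha>) = \<alpha>"
      by (simp add: dark_snowy rook_to_comp_comp_graph)
    show "\<forall>R\<in>rook_diagrams. dark (rook_to_comp R) = R"
      using dark_rook_to_comp by blast
    show "dark ` {\<alpha>. snowy \<alpha>} \<subseteq> rook_diagrams"
      using dark_snowy comp_graph_in_rook_diagrams by auto
    show "rook_to_comp ` rook_diagrams \<subseteq> {\<alpha>. snowy \<alpha>}"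
      using snowy_rook_to_comp by auto
  qed
  moreover have "the_inv_into {\<alpha>. snowy \<alpha>} dark R = rook_to_comp R" if "R \<in> rook_diagrams" for R
    using that bij_betw_imp_inj_on[OF bij] dark_rook_to_comp snowy_rook_to_comp
    by (blast intro: the_inv_into_f_eq)
  ultimately show ?thesis by blast
qed

end
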